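(* Let $e_1,e_2,e_3\in\mathbb{C}$ be pairwise distinct and let $\mathfrak{h}$ be a Lie subalgebra of finite codimension in $\mathfrak{R}_{e_1,e_2,e_3}$. Then every solvable ideal of $\mathfrak{h}$ is zero.
   Context: Work over $\mathbb{C}$. Let $E_{e_1,e_2,e_3}=\mathbb{C}[v_1,v_2,v_3]/I$, where $I$ is the ideal generated by $v_i^2-v_j^2+e_i-e_j$, $i,j=1,2,3$, and let $\hat v_i$ be the image of $v_i$. Let $\alpha_1,\alpha_2,\alpha_3$ be a basis of $\mathfrak{so}_3(\mathbb{C})$ with $[\alpha_1,\alpha_2]=\alpha_3$, $[\alpha_2,\alpha_3]=\alpha_1$, $[\alpha_3,\alpha_1]=\alpha_2$. The Lie algebra $\mathfrak{so}_3(\mathbb{C})\otimes_{\mathbb{C}}E_{e_1,e_2,e_3}$ has bracket $[\alpha\otimes h_1,\beta\otimes h_2]=[\alpha,\beta]\otimes h_1h_2$, and $\mathfrak{R}_{e_1,e_2,e_3}$ is its Lie subalgebra generated by $\alpha_i\otimes\hat v_i$, $i=1,2,3$. *)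

theory Defs
  imports Complex_Main "HOL-Library.Poly_Mapping" "HOL-Library.Product_Plus"
begin

text \<open>Polynomials in three variables: finitely supported maps from exponent
  vectors (a,b,c) (meaning v1^a v2^b v3^c) to coefficients; multiplication is
  the convolution product of Poly_Mapping.\<close>

type_synonym cpoly = "(nat \<times> nat \<times> nat) \<Rightarrow>\<^sub>0 complex"

definition pconst :: "complex \<Rightarrow> cpoly" where
  "pconst c = Poly_Mapping.single (0,0,0) c"

definition pvar :: "nat \<Rightarrow> cpoly" where
  "pvar i = Poly_Mapping.single
     (if i = 1 then (1,0,0) else if i = 2 then (0,1,0) else (0,0,1)) 1"

definition evec :: "complex \<Rightarrow> complex \<Rightarrow> complex \<Rightarrow> nat \<Rightarrow> complex" where
  "evec e1 e2 e3 i = (if i = 1 then e1 else if i = 2 then e2 else e3)"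

definition relgen :: "complex \<Rightarrow> complex \<Rightarrow> complex \<Rightarrow> nat \<Rightarrow> nat \<Rightarrow> cpoly" where
  "relgen e1 e2 e3 i j =
     pvar i ^ 2 - pvar j ^ 2 + pconst (evec e1 e2 e3 i - evec e1 e2 e3 j)"

definition relI :: "complex \<Rightarrow> complex \<Rightarrow> complex \<Rightarrow> cpoly set" where
  "relI e1 e2 e3 =
     {(\<Sum>i\<in>{1,2,3}. \<Sum>j\<in>{1,2,3}. c i j * relgen e1 e2 e3 i j) | c. True}"

text \<open>An element x1 (alpha1\<otimes>h1) + x2 (alpha2\<otimes>h2) + x3 (alpha3\<otimes>h3) is the
  triple (h1,h2,h3); elements of E = C[v]/I are cosets p + I.\<close>

type_synonym ptriple = "cpoly \<times> cpoly \<times> cpoly"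
type_synonym ltriple = "cpoly set \<times> cpoly set \<times> cpoly set"

definition pcoset :: "cpoly set \<Rightarrow> cpoly \<Rightarrow> cpoly set" where
  "pcoset I p = {q. q - p \<in> I}"

definition cls :: "cpoly set \<Rightarrow> ptriple \<Rightarrow> ltriple" where
  "cls I x = (case x of (p1,p2,p3) \<Rightarrow> (pcoset I p1, pcoset I p2, pcoset I p3))"

definition Lcarrier :: "cpoly set \<Rightarrow> ltriple set" where
  "Lcarrier I = range (cls I)"

definition rep :: "cpoly set \<Rightarrow> ltriple \<Rightarrow> ptriple" where
  "rep I X = (SOME x. cls I x = X)"

definition pscale :: "complex \<Rightarrow> ptriple \<Rightarrow> ptriple" where
  "pscale c x = (case x of (p1,p2,p3) \<Rightarrow> (pconst c * p1, pconst c * p2, pconst c * p3))"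

text \<open>Bracket: [alpha1,alpha2]=alpha3, [alpha2,alpha3]=alpha1, [alpha3,alpha1]=alpha2,
  extended E-bilinearly.\<close>
definition pbr :: "ptriple \<Rightarrow> ptriple \<Rightarrow> ptriple" where
  "pbr x y = (case x of (a1,a2,a3) \<Rightarrow> case y of (b1,b2,b3) \<Rightarrow>
      (a2*b3 - a3*b2, a3*b1 - a1*b3, a1*b2 - a2*b1))"

definition Lzero :: "cpoly set \<Rightarrow> ltriple" where
  "Lzero I = cls I 0"

definition Ladd :: "cpoly set \<Rightarrow> ltriple \<Rightarrow> ltriple \<Rightarrow> ltriple" where
  "Ladd I X Y = cls I (rep I X + rep I Y)"

definition Lscale :: "cpoly set \<Rightarrow> complex \<Rightarrow> ltriple \<Rightarrow> ltriple" where
  "Lscale I c X = cls I (pscale c (rep I X))"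

definition Lbr :: "cpoly set \<Rightarrow> ltriple \<Rightarrow> ltriple \<Rightarrow> ltriple" where
  "Lbr I X Y = cls I (pbr (rep I X) (rep I Y))"

inductive_set Lspan :: "cpoly set \<Rightarrow> ltriple set \<Rightarrow> ltriple set"
  for I :: "cpoly set" and S :: "ltriple set" where
  span_zero: "Lzero I \<in> Lspan I S"
| span_base: "x \<in> S \<Longrightarrow> x \<in> Lspan I S"
| span_add: "x \<in> Lspan I S \<Longrightarrow> y \<in> Lspan I S \<Longrightarrow> Ladd I x y \<in> Lspan I S"
| span_scale: "x \<in> Lspan I S \<Longrightarrow> Lscale I c x \<in> Lspan I S"

definition is_subspace :: "cpoly set \<Rightarrow> ltriple set \<Rightarrow> bool" where
  "is_subspace I V \<longleftrightarrow> V \<subseteq> Lcarrier I \<and> Lzero I \<in> V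
     \<and> (\<forall>x\<in>V. \<forall>y\<in>V. Ladd I x y \<in> V) \<and> (\<forall>c. \<forall>x\<in>V. Lscale I c x \<in> V)"

definition is_lie_subalgebra :: "cpoly set \<Rightarrow> ltriple set \<Rightarrow> bool" where
  "is_lie_subalgebra I V \<longleftrightarrow> is_subspace I V \<and> (\<forall>x\<in>V. \<forall>y\<in>V. Lbr I x y \<in> V)"

inductive_set Lgen :: "cpoly set \<Rightarrow> ltriple set \<Rightarrow> ltriple set"
  for I :: "cpoly set" and S :: "ltriple set" where
  gen_zero: "Lzero I \<in> Lgen I S"
| gen_base: "x \<in> S \<Longrightarrow> x \<in> Lgen I S"
| gen_add: "x \<in> Lgen I S \<Longrightarrow> y \<in> Lgen I S \<Longrightarrow> Ladd I x y \<in> Lgen I S"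
| gen_scale: "x \<in> Lgen I S \<Longrightarrow> Lscale I c x \<in> Lgen I S"
| gen_br: "x \<in> Lgen I S \<Longrightarrow> y \<in> Lgen I S \<Longrightarrow> Lbr I x y \<in> Lgen I S"

definition Rgens :: "complex \<Rightarrow> complex \<Rightarrow> complex \<Rightarrow> ltriple set" where
  "Rgens e1 e2 e3 = cls (relI e1 e2 e3) ` {(pvar 1, 0, 0), (0, pvar 2, 0), (0, 0, pvar 3)}"

definition Ralg :: "complex \<Rightarrow> complex \<Rightarrow> complex \<Rightarrow> ltriple set" where
  "Ralg e1 e2 e3 = Lgen (relI e1 e2 e3) (Rgens e1 e2 e3)"

definition finite_codim :: "cpoly set \<Rightarrow> ltriple set \<Rightarrow> ltriple set \<Rightarrow> bool" where
  "finite_codim I h R \<longleftrightarrow> (\<exists>F. finite F \<and> F \<subseteq> R \<and> R = Lspan I (h \<union> F))"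

definition is_lie_ideal :: "cpoly set \<Rightarrow> ltriple set \<Rightarrow> ltriple set \<Rightarrow> bool" where
  "is_lie_ideal I s h \<longleftrightarrow> is_subspace I s \<and> s \<subseteq> h \<and> (\<forall>x\<in>h. \<forall>y\<in>s. Lbr I x y \<in> s)"

fun derived :: "cpoly set \<Rightarrow> ltriple set \<Rightarrow> nat \<Rightarrow> ltriple set" where
  "derived I s 0 = s"
| "derived I s (Suc k) = Lspan I {Lbr I x y | x y. x \<in> derived I s k \<and> y \<in> derived I s k}"

definition is_solvable :: "cpoly set \<Rightarrow> ltriple set \<Rightarrow> bool" where
  "is_solvable I s \<longleftrightarrow> (\<exists>k. derived I s k = {Lzero I})"

end

(*
  Evaluation at a point (t1, t2, t3) of the curve t1^2 + e1 = t2^2 + e2 = t3^2 + e3 is a Lie algebra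
  homomorphism from so3 \<otimes> E to so3(C).  The iterated brackets (-ad(\<alpha>j \<otimes> vj)^2)^k (\<alpha>i \<otimes> vi)
  evaluate to tj^(2k) ti \<alpha>i; as h has finite codimension, a nontrivial combination of finitely many
  of them lies in h, so h contains an element evaluating to G(tj^2) ti \<alpha>i for a nonzero polynomial G.
  Hence h maps onto so3(C) at every generic point of the curve.  A nonzero element of s does not
  vanish at some generic point: modulo I every polynomial is A + B v2 + C v3 + D v2 v3 with A, B, C, D
  in C[v1], and the four points (t1, +-t2, +-t3) separate these coefficients.  There the image of s
  is a nonzero ideal of the simple Lie algebra so3(C), hence all of it; since so3(C) is perfect, the
  same holds for every term of the derived series, so s is not solvable.
*)

theory Submission
  imports Defs "HOL-Computational_Algebra.Polynomial"
begin

section \<open>Evaluating polynomials\<close>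

definition pm_eval :: "('m \<Rightarrow> 'a) \<Rightarrow> ('m \<Rightarrow>\<^sub>0 'a) \<Rightarrow> 'a::comm_semiring_1" where
  "pm_eval \<chi> p = (\<Sum>m\<in>Poly_Mapping.keys p. Poly_Mapping.lookup p m * \<chi> m)"

lemma pm_eval_superset:
  assumes "finite S" "Poly_Mapping.keys p \<subseteq> S"
  shows "pm_eval \<chi> p = (\<Sum>m\<in>S. Poly_Mapping.lookup p m * \<chi> m)"
  unfolding pm_eval_def using assms by (intro sum.mono_neutral_left) (auto simp: in_keys_iff)

lemma pm_eval_zero [simp]: "pm_eval \<chi> 0 = 0"
  by (simp add: pm_eval_def)

lemma pm_eval_single [simp]: "pm_eval \<chi> (Poly_Mapping.single m c) = c * \<chi> m"
  by (subst pm_eval_superset[of "{m}"]) auto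

lemma pm_eval_add [simp]: "pm_eval \<chi> (p + q) = pm_eval \<chi> p + pm_eval \<chi> q"
proof -
  let ?S = "Poly_Mapping.keys p \<union> Poly_Mapping.keys q"
  have "pm_eval \<chi> (p + q) = (\<Sum>m\<in>?S. Poly_Mapping.lookup (p + q) m * \<chi> m)"
    by (rule pm_eval_superset) (auto simp: keys_add)
  also have "\<dots> = pm_eval \<chi> p + pm_eval \<chi> q"
    by (simp add: lookup_add distrib_right sum.distrib pm_eval_superset[of ?S])
  finally show ?thesis .
qed

lemma pm_eval_sum: "pm_eval \<chi> (sum f A) = (\<Sum>a\<in>A. pm_eval \<chi> (f a))"
  by (induction A rule: infinite_finite_induct) auto

lemma sum_single_lookup: "(\<Sum>m\<in>Poly_Mapping.keys p. Poly_Mapping.single m (Poly_Mapping.lookup p m)) = p"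
  by (rule poly_mapping_eqI) (simp add: lookup_sum lookup_single when_def in_keys_iff)

lemma pm_eval_mult:
  assumes hom: "\<And>m n. \<chi> (m + n) = \<chi> m * \<chi> n"
  shows "pm_eval \<chi> (p * q) = pm_eval \<chi> p * pm_eval \<chi> q"
proof -
  have "p * q = (\<Sum>m\<in>Poly_Mapping.keys p. \<Sum>n\<in>Poly_Mapping.keys q.
      Poly_Mapping.single (m + n) (Poly_Mapping.lookup p m * Poly_Mapping.lookup q n))"
    by (subst (1 2) sum_single_lookup[symmetric]) (simp add: sum_product mult_single)
  then have "pm_eval \<chi> (p * q) = (\<Sum>m\<in>Poly_Mapping.keys p. \<Sum>n\<in>Poly_Mapping.keys q.
      (Poly_Mapping.lookup p m * \<chi> m) * (Poly_Mapping.lookup q n * \<chi> n))"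
    by (simp add: pm_eval_sum hom mult_ac)
  then show ?thesis
    by (simp add: pm_eval_def sum_product)
qed

lemma pm_eval_uminus [simp]: "pm_eval \<chi> (- p) = - pm_eval \<chi> (p :: 'm \<Rightarrow>\<^sub>0 'a::comm_ring_1)"
  using pm_eval_add[of \<chi> p "- p"] by (simp add: eq_neg_iff_add_eq_0 add.commute)

lemma pm_eval_diff [simp]: "pm_eval \<chi> (p - q) = pm_eval \<chi> p - pm_eval \<chi> (q :: 'm \<Rightarrow>\<^sub>0 'a::comm_ring_1)"
  using pm_eval_add[of \<chi> p "- q"] by simp

type_synonym c3 = "complex \<times> complex \<times> complex"

fun monomial_at :: "c3 \<Rightarrow> nat \<times> nat \<times> nat \<Rightarrow> complex" where
  "monomial_at (t1, t2, t3) (a, b, c) = t1 ^ a * t2 ^ b * t3 ^ c"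

abbreviation ev :: "c3 \<Rightarrow> cpoly \<Rightarrow> complex" where
  "ev P \<equiv> pm_eval (monomial_at P)"

lemma monomial_at_add: "monomial_at P (m + n) = monomial_at P m * monomial_at P n"
  by (cases P; cases m; cases n) (simp add: power_add)

lemma ev_mult [simp]: "ev P (p * q) = ev P p * ev P q"
  by (simp add: pm_eval_mult monomial_at_add)

lemma ev_one [simp]: "ev P 1 = 1"
  by (cases P) (simp add: zero_prod_def flip: single_one)

lemma ev_power [simp]: "ev P (p ^ n) = ev P p ^ n"
  by (induction n) simp_all

lemma ev_pconst [simp]: "ev P (pconst c) = c"
  by (cases P) (simp add: pconst_def)

lemma ev_pvar [simp]:
  "ev (t1, t2, t3) (pvar i) = (if i = 1 then t1 else if i = 2 then t2 else t3)"
  by (simp add: pvar_def)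

section \<open>The ideal I and its curve\<close>

lemma relI_intro:
  "p = (\<Sum>i\<in>{1,2,3}. \<Sum>j\<in>{1,2,3}. c i j * relgen e1 e2 e3 i j) \<Longrightarrow> p \<in> relI e1 e2 e3"
  unfolding relI_def by blast

lemma relI_zero [simp]: "0 \<in> relI e1 e2 e3"
  by (rule relI_intro[of _ "\<lambda>i j. 0"]) simp

lemma relI_add:
  assumes "p \<in> relI e1 e2 e3" "q \<in> relI e1 e2 e3"
  shows "p + q \<in> relI e1 e2 e3"
proof -
  obtain c d where "p = (\<Sum>i\<in>{1,2,3}. \<Sum>j\<in>{1,2,3}. c i j * relgen e1 e2 e3 i j)"
    and "q = (\<Sum>i\<in>{1,2,3}. \<Sum>j\<in>{1,2,3}. d i j * relgen e1 e2 e3 i j)"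
    using assms unfolding relI_def by blast
  then have "p + q = (\<Sum>i\<in>{1,2,3}. \<Sum>j\<in>{1,2,3}. (c i j + d i j) * relgen e1 e2 e3 i j)"
    by (simp only: distrib_right sum.distrib)
  then show ?thesis
    by (rule relI_intro)
qed

lemma relI_mult:
  assumes "p \<in> relI e1 e2 e3"
  shows "q * p \<in> relI e1 e2 e3"
proof -
  obtain c where "p = (\<Sum>i\<in>{1,2,3}. \<Sum>j\<in>{1,2,3}. c i j * relgen e1 e2 e3 i j)"
    using assms unfolding relI_def by blast
  then have "q * p = (\<Sum>i\<in>{1,2,3}. \<Sum>j\<in>{1,2,3}. (q * c i j) * relgen e1 e2 e3 i j)"
    by (simp only: sum_distrib_left mult.assoc)
  then show ?thesis
    by (rule relI_intro)
qed

lemma relI_diff: "p \<in> relI e1 e2 e3 \<Longrightarrow> q \<in> relI e1 e2 e3 \<Longrightarrow> p - q \<in> relI e1 e2 e3"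
  using relI_add[of p e1 e2 e3 "(- 1) * q"] relI_mult[of q e1 e2 e3 "- 1"] by simp

lemma relgen_in_relI:
  assumes "i \<in> {1, 2, 3}" "j \<in> {1, 2, 3}"
  shows "relgen e1 e2 e3 i j \<in> relI e1 e2 e3"
  unfolding relI_def using assms
  by (auto intro!: exI[of _ "\<lambda>a b. if a = i \<and> b = j then 1 else 0"])

\<comment> \<open>\<open>t1\<^sup>2 + e1\<close> is the common value of the \<open>ti\<^sup>2 + ei\<close>;
  a point is generic below when this value avoids a given finite set\<close>
fun on_curve :: "complex \<Rightarrow> complex \<Rightarrow> complex \<Rightarrow> c3 \<Rightarrow> bool" where
  "on_curve e1 e2 e3 (t1, t2, t3) \<longleftrightarrow> t1\<^sup>2 + e1 = t2\<^sup>2 + e2 \<and> t1\<^sup>2 + e1 = t3\<^sup>2 + e3"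

declare on_curve.simps [simp del]

lemma ev_relgen:
  assumes "on_curve e1 e2 e3 P" "i \<in> {1, 2, 3}" "j \<in> {1, 2, 3}"
  shows "ev P (relgen e1 e2 e3 i j) = 0"
proof -
  obtain t1 t2 t3 where P: "P = (t1, t2, t3)"
    by (cases P)
  have level: "(ev P (pvar k))\<^sup>2 + evec e1 e2 e3 k = t1\<^sup>2 + e1" if "k \<in> {1, 2, 3}" for k
    using that assms(1) by (auto simp: P evec_def on_curve.simps)
  show ?thesis
    using level[OF assms(2)] level[OF assms(3)] by (simp add: relgen_def algebra_simps)
qed

lemma ev_relI:
  assumes "on_curve e1 e2 e3 P" "p \<in> relI e1 e2 e3"
  shows "ev P p = 0"
  using assms(2) unfolding relI_def by (auto simp: pm_eval_sum ev_relgen[OF assms(1)])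

section \<open>Normal form modulo I\<close>

definition poly_v1 :: "complex poly \<Rightarrow> cpoly" where
  "poly_v1 A = poly (map_poly pconst A) (pvar 1)"

lemma pconst_0 [simp]: "pconst 0 = 0"
  by (simp add: pconst_def)

lemma pconst_add: "pconst (a + b) = pconst a + pconst b"
  by (simp add: pconst_def single_add)

lemma pconst_mult: "pconst (a * b) = pconst a * pconst b"
  by (simp add: pconst_def mult_single)

lemma pconst_diff: "pconst (a - b) = pconst a - pconst b"
  by (simp add: pconst_def single_diff)

lemma poly_v1_0 [simp]: "poly_v1 0 = 0"
  by (simp add: poly_v1_def)

lemma poly_v1_pCons: "poly_v1 (pCons a A) = pconst a + pvar 1 * poly_v1 A"
  by (simp add: poly_v1_def map_poly_pCons)

lemma poly_v1_add: "poly_v1 (A + B) = poly_v1 A + poly_v1 B"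
proof -
  have "map_poly pconst (A + B) = map_poly pconst A + map_poly pconst B"
    by (rule poly_eqI) (simp add: coeff_map_poly pconst_add)
  then show ?thesis
    by (simp add: poly_v1_def)
qed

lemma poly_v1_smult: "poly_v1 (smult c A) = pconst c * poly_v1 A"
  by (simp add: poly_v1_def map_poly_smult pconst_mult)

lemma ev_poly_v1 [simp]: "ev (t1, t2, t3) (poly_v1 A) = poly A t1"
  by (induction A) (simp_all add: poly_v1_pCons)

lemma poly_v1_times_square_plus:
  "poly_v1 (pCons 0 (pCons 0 B) + smult d B) = (pvar 1 ^ 2 + pconst d) * poly_v1 B"
  by (simp add: poly_v1_add poly_v1_pCons poly_v1_smult algebra_simps power2_eq_square)

\<comment> \<open>Modulo I, \<open>v2\<^sup>2 = v1\<^sup>2 + e1 - e2\<close> and \<open>v3\<^sup>2 = v1\<^sup>2 + e1 - e3\<close>,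
  so every polynomial reduces to this shape\<close>
definition normal_form ::
    "complex poly \<Rightarrow> complex poly \<Rightarrow> complex poly \<Rightarrow> complex poly \<Rightarrow> cpoly" where
  "normal_form A B C D = poly_v1 A + poly_v1 B * pvar 2 + poly_v1 C * pvar 3 + poly_v1 D * (pvar 2 * pvar 3)"

definition has_normal_form :: "complex \<Rightarrow> complex \<Rightarrow> complex \<Rightarrow> cpoly \<Rightarrow> bool" where
  "has_normal_form e1 e2 e3 p \<longleftrightarrow> (\<exists>A B C D. p - normal_form A B C D \<in> relI e1 e2 e3)"

lemma has_normal_form_pconst: "has_normal_form e1 e2 e3 (pconst c)"
proof -
  have "pconst c - normal_form [:c:] 0 0 0 = 0"
    by (simp add: normal_form_def poly_v1_pCons)
  then show ?thesis
    unfolding has_normal_form_def by (metis relI_zero)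
qed

lemma has_normal_form_add:
  assumes "has_normal_form e1 e2 e3 p" "has_normal_form e1 e2 e3 q"
  shows "has_normal_form e1 e2 e3 (p + q)"
proof -
  obtain A B C D A' B' C' D' where "p - normal_form A B C D \<in> relI e1 e2 e3"
    and "q - normal_form A' B' C' D' \<in> relI e1 e2 e3"
    using assms unfolding has_normal_form_def by blast
  moreover have "(p + q) - normal_form (A + A') (B + B') (C + C') (D + D')
      = (p - normal_form A B C D) + (q - normal_form A' B' C' D')"
    by (simp add: normal_form_def poly_v1_add algebra_simps)
  ultimately show ?thesis
    unfolding has_normal_form_def by (metis relI_add)
qed

lemma has_normal_form_pvar1_mult:
  assumes "has_normal_form e1 e2 e3 p"
  shows "has_normal_form e1 e2 e3 (pvar 1 * p)"
proof -
  obtain A B C D where "p - normal_form A B C D \<in> relI e1 e2 e3"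
    using assms unfolding has_normal_form_def by blast
  moreover have "pvar 1 * p - normal_form (pCons 0 A) (pCons 0 B) (pCons 0 C) (pCons 0 D)
      = pvar 1 * (p - normal_form A B C D)"
    by (simp add: normal_form_def poly_v1_pCons algebra_simps)
  ultimately show ?thesis
    unfolding has_normal_form_def by (metis relI_mult)
qed

lemma has_normal_form_pvar2_mult:
  assumes "has_normal_form e1 e2 e3 p"
  shows "has_normal_form e1 e2 e3 (pvar 2 * p)"
proof -
  let ?Q = "\<lambda>B. pCons 0 (pCons 0 B) + smult (e1 - e2) B"
  obtain A B C D where "p - normal_form A B C D \<in> relI e1 e2 e3"
    using assms unfolding has_normal_form_def by blast
  then have "pvar 2 * (p - normal_form A B C D)
      + (poly_v1 B + poly_v1 D * pvar 3) * relgen e1 e2 e3 2 1 \<in> relI e1 e2 e3"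
    by (intro relI_add relI_mult relgen_in_relI) auto
  moreover have "pvar 2 * p - normal_form (?Q B) A (?Q D) C
      = pvar 2 * (p - normal_form A B C D) + (poly_v1 B + poly_v1 D * pvar 3) * relgen e1 e2 e3 2 1"
    by (simp add: normal_form_def poly_v1_times_square_plus relgen_def evec_def pconst_diff
        algebra_simps power2_eq_square)
  ultimately show ?thesis
    unfolding has_normal_form_def by metis
qed

lemma has_normal_form_pvar3_mult:
  assumes "has_normal_form e1 e2 e3 p"
  shows "has_normal_form e1 e2 e3 (pvar 3 * p)"
proof -
  let ?Q = "\<lambda>B. pCons 0 (pCons 0 B) + smult (e1 - e3) B"
  obtain A B C D where "p - normal_form A B C D \<in> relI e1 e2 e3"
    using assms unfolding has_normal_form_def by blast
  then have "pvar 3 * (p - normal_form A B C D)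
      + (poly_v1 C + poly_v1 D * pvar 2) * relgen e1 e2 e3 3 1 \<in> relI e1 e2 e3"
    by (intro relI_add relI_mult relgen_in_relI) auto
  moreover have "pvar 3 * p - normal_form (?Q C) (?Q D) A B
      = pvar 3 * (p - normal_form A B C D) + (poly_v1 C + poly_v1 D * pvar 2) * relgen e1 e2 e3 3 1"
    by (simp add: normal_form_def poly_v1_times_square_plus relgen_def evec_def pconst_diff
        algebra_simps power2_eq_square)
  ultimately show ?thesis
    unfolding has_normal_form_def by metis
qed

lemma single_eq_pvar_powers:
  "Poly_Mapping.single (a, b, c) k = pvar 1 ^ a * (pvar 2 ^ b * (pvar 3 ^ c * pconst k))"
proof -
  have "pvar 1 ^ a = Poly_Mapping.single (a, 0, 0) 1"
    by (induction a) (simp_all add: pvar_def mult_single zero_prod_def flip: single_one)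
  moreover have "pvar 2 ^ b = Poly_Mapping.single (0, b, 0) 1"
    by (induction b) (simp_all add: pvar_def mult_single zero_prod_def flip: single_one)
  moreover have "pvar 3 ^ c = Poly_Mapping.single (0, 0, c) 1"
    by (induction c) (simp_all add: pvar_def mult_single zero_prod_def flip: single_one)
  ultimately show ?thesis
    by (simp add: pconst_def mult_single)
qed

lemma has_normal_form_all: "has_normal_form e1 e2 e3 p"
proof -
  have power_mult: "has_normal_form e1 e2 e3 (x ^ n * q)"
    if step: "\<And>q. has_normal_form e1 e2 e3 q \<Longrightarrow> has_normal_form e1 e2 e3 (x * q)"
      and "has_normal_form e1 e2 e3 q" for x q n
    using that(2) by (induction n) (simp_all add: mult.assoc step)
  have single: "has_normal_form e1 e2 e3 (Poly_Mapping.single m k)" for m k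
    by (cases m) (simp only: single_eq_pvar_powers, intro power_mult has_normal_form_pvar1_mult
        has_normal_form_pvar2_mult has_normal_form_pvar3_mult has_normal_form_pconst)
  have "has_normal_form e1 e2 e3 (\<Sum>m\<in>S. Poly_Mapping.single m (Poly_Mapping.lookup p m))" for S
    by (induction S rule: infinite_finite_induct)
      (simp_all add: has_normal_form_add single has_normal_form_pconst[of _ _ _ 0, simplified])
  then show ?thesis
    by (metis sum_single_lookup)
qed

lemma coefficients_zero_if_zero_at_signs:
  fixes a b c d y z :: complex
  assumes "\<And>\<sigma> \<tau>. \<sigma> \<in> {1, -1} \<Longrightarrow> \<tau> \<in> {1, -1} \<Longrightarrow>
      a + b * (\<sigma> * y) + c * (\<tau> * z) + d * (\<sigma> * y * (\<tau> * z)) = 0"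
    and "y \<noteq> 0" "z \<noteq> 0"
  shows "a = 0 \<and> b = 0 \<and> c = 0 \<and> d = 0"
proof -
  have "a + b * y + c * z + d * (y * z) = 0" "a - b * y + c * z - d * (y * z) = 0"
    "a + b * y - c * z - d * (y * z) = 0" "a - b * y - c * z + d * (y * z) = 0"
    using assms(1)[of 1 1] assms(1)[of "-1" 1] assms(1)[of 1 "-1"] assms(1)[of "-1" "-1"]
    by simp_all
  then have "4 * a = 0" "4 * (b * y) = 0" "4 * (c * z) = 0" "4 * (d * (y * z)) = 0"
    by algebra+
  then show ?thesis
    using assms(2,3) by simp
qed

lemma finite_square_plus_preimage:
  assumes "finite Z"
  shows "finite {t :: complex. t\<^sup>2 + e \<in> Z}"
proof (rule finite_subset)
  show "{t. t\<^sup>2 + e \<in> Z} \<subseteq> (\<Union>l\<in>Z. {csqrt (l - e), - csqrt (l - e)})"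
  proof
    fix t :: complex
    assume "t \<in> {t. t\<^sup>2 + e \<in> Z}"
    moreover have "t = csqrt (t\<^sup>2 + e - e) \<or> t = - csqrt (t\<^sup>2 + e - e)"
      using power2_eq_iff[of t "csqrt (t\<^sup>2)"] by simp
    ultimately show "t \<in> (\<Union>l\<in>Z. {csqrt (l - e), - csqrt (l - e)})"
      by blast
  qed
qed (use assms in simp)

lemma poly_eq_0_if_cofinitely_zero:
  fixes A :: "complex poly"
  assumes "finite T" "\<And>t. t \<notin> T \<Longrightarrow> poly A t = 0"
  shows "A = 0"
proof (rule ccontr)
  assume "A \<noteq> 0"
  have "- T \<subseteq> {t. poly A t = 0}"
    using assms(2) by blast
  moreover have "infinite (- T)"
    using assms(1) by (simp add: Compl_eq_Diff_UNIV Diff_infinite_finite infinite_UNIV_char_0)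
  ultimately show False
    using poly_roots_finite[OF \<open>A \<noteq> 0\<close>] finite_subset by blast
qed

lemma generic_curve_point_nonvanishing:
  assumes "p \<notin> relI e1 e2 e3" "finite Z"
  obtains t1 t2 t3 where "on_curve e1 e2 e3 (t1, t2, t3)" "t1\<^sup>2 + e1 \<notin> Z" "ev (t1, t2, t3) p \<noteq> 0"
proof -
  obtain A B C D where red: "p - normal_form A B C D \<in> relI e1 e2 e3"
    using has_normal_form_all unfolding has_normal_form_def by blast
  define T where "T = {t. t\<^sup>2 + e1 \<in> insert e2 (insert e3 Z)}"
  have "finite T"
    unfolding T_def using assms(2) by (intro finite_square_plus_preimage) simp
  have "\<exists>t1 t2 t3. on_curve e1 e2 e3 (t1, t2, t3) \<and> t1\<^sup>2 + e1 \<notin> Z \<and> ev (t1, t2, t3) p \<noteq> 0"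
  proof (rule ccontr)
    assume "\<not> ?thesis"
    then have vanish: "ev (t1, t2, t3) p = 0"
      if "on_curve e1 e2 e3 (t1, t2, t3)" "t1\<^sup>2 + e1 \<notin> Z" for t1 t2 t3
      using that by blast
    have "poly A t = 0 \<and> poly B t = 0 \<and> poly C t = 0 \<and> poly D t = 0" if "t \<notin> T" for t
    proof (rule coefficients_zero_if_zero_at_signs)
      define y where "y = csqrt (t\<^sup>2 + e1 - e2)"
      define z where "z = csqrt (t\<^sup>2 + e1 - e3)"
      show "y \<noteq> 0" "z \<noteq> 0"
        using \<open>t \<notin> T\<close> by (simp_all add: y_def z_def T_def)
      fix \<sigma> \<tau> :: complex
      assume "\<sigma> \<in> {1, -1}" "\<tau> \<in> {1, -1}"
      then have on: "on_curve e1 e2 e3 (t, \<sigma> * y, \<tau> * z)"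
        by (auto simp: y_def z_def power_mult_distrib on_curve.simps)
      then have "ev (t, \<sigma> * y, \<tau> * z) p = ev (t, \<sigma> * y, \<tau> * z) (normal_form A B C D)"
        using ev_relI[OF on red] by simp
      then show "poly A t + poly B t * (\<sigma> * y) + poly C t * (\<tau> * z)
          + poly D t * (\<sigma> * y * (\<tau> * z)) = 0"
        using vanish[OF on] \<open>t \<notin> T\<close> by (simp add: normal_form_def T_def)
    qed
    then have "A = 0" "B = 0" "C = 0" "D = 0"
      using poly_eq_0_if_cofinitely_zero[OF \<open>finite T\<close>] by blast+
    then show False
      using red assms(1) by (simp add: normal_form_def)
  qed
  then show thesis
    using that by blast
qed

section \<open>Evaluating so3 \<otimes> E at points of the curve\<close>

\<comment> \<open>so3(C) with \<open>\<alpha>1, \<alpha>2, \<alpha>3\<close> as the standard basis of \<open>C\<^sup>3\<close>: the bracket is the cross product\<close>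
fun cross :: "c3 \<Rightarrow> c3 \<Rightarrow> c3" where
  "cross (a1, a2, a3) (b1, b2, b3) = (a2 * b3 - a3 * b2, a3 * b1 - a1 * b3, a1 * b2 - a2 * b1)"

fun scale :: "complex \<Rightarrow> c3 \<Rightarrow> c3" where
  "scale c (a1, a2, a3) = (c * a1, c * a2, c * a3)"

fun dot :: "c3 \<Rightarrow> c3 \<Rightarrow> complex" where
  "dot (a1, a2, a3) (b1, b2, b3) = a1 * b1 + a2 * b2 + a3 * b3"

lemma scale_zero [simp]: "scale 0 u = 0" "scale c 0 = 0"
  by (cases u; simp add: zero_prod_def)+

lemma scale_add_left: "scale (a + b) u = scale a u + scale b u"
  by (cases u) (simp add: distrib_right)

lemma scale_add_right: "scale c (u + v) = scale c u + scale c v"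
  by (cases u; cases v) (simp add: distrib_left)

lemma scale_diff_right: "scale c (u - v) = scale c u - scale c v"
  by (cases u; cases v) (simp add: right_diff_distrib)

lemma scale_scale [simp]: "scale a (scale b u) = scale (a * b) u"
  by (cases u) (simp add: mult.assoc)

lemma scale_one [simp]: "scale 1 u = u"
  by (cases u) simp

lemma scale_minus_one [simp]: "scale (- 1) u = - u"
  by (cases u) simp

lemma scale_sum_left: "scale (sum f A) u = (\<Sum>a\<in>A. scale (f a) u)"
  by (induction A rule: infinite_finite_induct) (simp_all add: scale_add_left)

lemma scale_sum_right: "scale c (sum f A) = (\<Sum>a\<in>A. scale c (f a))"
  by (induction A rule: infinite_finite_induct) (simp_all add: scale_add_right)

lemma sum_scale_sum_scale:
  "(\<Sum>k\<in>K. scale (a k) (\<Sum>f\<in>F. scale (c k f) (v f))) = (\<Sum>f\<in>F. scale (\<Sum>k\<in>K. a k * c k f) (v f))"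
  unfolding scale_sum_right scale_sum_left scale_scale by (rule sum.swap)

lemma cross_cross_right: "cross (cross u b) b = scale (dot u b) b - scale (dot b b) u"
  by (cases u; cases b) (simp add: algebra_simps)

fun ev3 :: "c3 \<Rightarrow> ptriple \<Rightarrow> c3" where
  "ev3 P (p1, p2, p3) = (ev P p1, ev P p2, ev P p3)"

lemma ev3_add: "ev3 P (x + y) = ev3 P x + ev3 P y"
  by (cases x; cases y) simp

lemma ev3_pscale: "ev3 P (pscale c x) = scale c (ev3 P x)"
  by (cases x) (simp add: pscale_def)

lemma ev3_pbr: "ev3 P (pbr x y) = cross (ev3 P x) (ev3 P y)"
  by (cases x; cases y) (simp add: pbr_def)

lemma ev3_zero: "ev3 P 0 = 0"
  by (simp add: zero_prod_def)

\<comment> \<open>depends on the choice made by \<open>rep\<close> except at points of the curve, where I vanishes\<close>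
definition eval_at :: "cpoly set \<Rightarrow> c3 \<Rightarrow> ltriple \<Rightarrow> c3" where
  "eval_at I P X = ev3 P (rep I X)"

lemma pcoset_relI_eq_iff:
  "pcoset (relI e1 e2 e3) p = pcoset (relI e1 e2 e3) q \<longleftrightarrow> p - q \<in> relI e1 e2 e3"
proof
  assume "pcoset (relI e1 e2 e3) p = pcoset (relI e1 e2 e3) q"
  moreover have "p \<in> pcoset (relI e1 e2 e3) p"
    by (simp add: pcoset_def)
  ultimately show "p - q \<in> relI e1 e2 e3"
    by (simp add: pcoset_def)
next
  assume "p - q \<in> relI e1 e2 e3"
  then have "r - p \<in> relI e1 e2 e3 \<longleftrightarrow> r - q \<in> relI e1 e2 e3" for r
    using relI_add[of "r - p" e1 e2 e3 "p - q"] relI_diff[of "r - q" e1 e2 e3 "p - q"] by auto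
  then show "pcoset (relI e1 e2 e3) p = pcoset (relI e1 e2 e3) q"
    by (simp add: pcoset_def)
qed

lemma eval_at_cls:
  assumes "on_curve e1 e2 e3 P"
  shows "eval_at (relI e1 e2 e3) P (cls (relI e1 e2 e3) x) = ev3 P x"
proof -
  let ?I = "relI e1 e2 e3"
  obtain y1 y2 y3 where y: "rep ?I (cls ?I x) = (y1, y2, y3)"
    by (cases "rep ?I (cls ?I x)")
  obtain x1 x2 x3 where x: "x = (x1, x2, x3)"
    by (cases x)
  have "cls ?I (rep ?I (cls ?I x)) = cls ?I x"
    unfolding rep_def by (rule someI) (rule refl)
  then have "cls ?I (y1, y2, y3) = cls ?I x"
    by (simp only: y)
  then have "y1 - x1 \<in> ?I" "y2 - x2 \<in> ?I" "y3 - x3 \<in> ?I"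
    by (simp_all add: x cls_def pcoset_relI_eq_iff)
  then have "ev P y1 = ev P x1" "ev P y2 = ev P x2" "ev P y3 = ev P x3"
    by (auto dest: ev_relI[OF assms])
  then show ?thesis
    unfolding eval_at_def y by (simp add: x)
qed

lemma eval_at_Lzero:
  "on_curve e1 e2 e3 P \<Longrightarrow> eval_at (relI e1 e2 e3) P (Lzero (relI e1 e2 e3)) = 0"
  by (simp add: Lzero_def eval_at_cls ev3_zero)

lemma eval_at_Ladd:
  "on_curve e1 e2 e3 P \<Longrightarrow> eval_at (relI e1 e2 e3) P (Ladd (relI e1 e2 e3) X Y) =
     eval_at (relI e1 e2 e3) P X + eval_at (relI e1 e2 e3) P Y"
  by (simp add: Ladd_def eval_at_cls) (simp add: eval_at_def ev3_add)

lemma eval_at_Lscale: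
  "on_curve e1 e2 e3 P \<Longrightarrow> eval_at (relI e1 e2 e3) P (Lscale (relI e1 e2 e3) c X) =
     scale c (eval_at (relI e1 e2 e3) P X)"
  by (simp add: Lscale_def eval_at_cls) (simp add: eval_at_def ev3_pscale)

lemma eval_at_Lbr:
  "on_curve e1 e2 e3 P \<Longrightarrow> eval_at (relI e1 e2 e3) P (Lbr (relI e1 e2 e3) X Y) =
     cross (eval_at (relI e1 e2 e3) P X) (eval_at (relI e1 e2 e3) P Y)"
  by (simp add: Lbr_def eval_at_cls) (simp add: eval_at_def ev3_pbr)

lemma eval_at_nonzero_at_generic_point:
  assumes "X \<in> Lcarrier (relI e1 e2 e3)" "X \<noteq> Lzero (relI e1 e2 e3)" "finite Z"
  obtains t1 t2 t3 where "on_curve e1 e2 e3 (t1, t2, t3)" "t1\<^sup>2 + e1 \<notin> Z"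
    "eval_at (relI e1 e2 e3) (t1, t2, t3) X \<noteq> 0"
proof -
  let ?I = "relI e1 e2 e3"
  obtain x1 x2 x3 where X: "X = cls ?I (x1, x2, x3)"
    using assms(1) unfolding Lcarrier_def by auto
  obtain p where p: "p \<in> {x1, x2, x3}" "p \<notin> ?I"
    using assms(2) by (auto simp: X Lzero_def cls_def zero_prod_def pcoset_relI_eq_iff)
  obtain t1 t2 t3 where on: "on_curve e1 e2 e3 (t1, t2, t3)" and "t1\<^sup>2 + e1 \<notin> Z"
    and "ev (t1, t2, t3) p \<noteq> 0"
    using generic_curve_point_nonvanishing[OF p(2) assms(3)] by blast
  moreover have "eval_at ?I (t1, t2, t3) X \<noteq> 0"
    using \<open>ev (t1, t2, t3) p \<noteq> 0\<close> p(1) by (auto simp: X eval_at_cls[OF on] zero_prod_def)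
  ultimately show thesis
    using that by blast
qed

lemma c3_subspace_eq_UNIV:
  assumes add_closed: "\<And>u v. u \<in> J \<Longrightarrow> v \<in> J \<Longrightarrow> u + v \<in> J"
    and scale_closed: "\<And>c u. u \<in> J \<Longrightarrow> scale c u \<in> J"
    and "(a, 0, 0) \<in> J" "(0, b, 0) \<in> J" "(0, 0, c) \<in> J" "a \<noteq> 0" "b \<noteq> 0" "c \<noteq> 0"
  shows "J = UNIV"
proof -
  have "(x, y, z) \<in> J" for x y z
    using add_closed[OF scale_closed[OF assms(3), of "x / a"]
        add_closed[OF scale_closed[OF assms(4), of "y / b"] scale_closed[OF assms(5), of "z / c"]]]
      assms(6-8)
    by simp
  then show ?thesis
    by auto
qed

lemma cross_ideal_eq_UNIV:
  assumes add_closed: "\<And>u v. u \<in> J \<Longrightarrow> v \<in> J \<Longrightarrow> u + v \<in> J"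
    and scale_closed: "\<And>c u. u \<in> J \<Longrightarrow> scale c u \<in> J"
    and cross_closed: "\<And>u v. v \<in> J \<Longrightarrow> cross u v \<in> J"
    and "x \<in> J" "x \<noteq> 0"
  shows "J = UNIV"
proof -
  have unit_in_J: "e \<in> J" if "e \<in> {(1, 0, 0), (0, 1, 0), (0, 0, 1)}" "dot e x \<noteq> 0" for e
  proof -
    \<comment> \<open>\<open>x + e \<times> (e \<times> x)\<close> is the component of \<open>x\<close> along the unit vector \<open>e\<close>\<close>
    have "x + cross e (cross e x) = scale (dot e x) e"
      using that(1) by (cases x) auto
    then have "scale (dot e x) e \<in> J"
      using add_closed cross_closed \<open>x \<in> J\<close> by metis
    then show ?thesis
      using scale_closed[of "scale (dot e x) e" "1 / dot e x"] that(2) by simp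
  qed
  have "(1, 0, 0) \<in> J \<or> (0, 1, 0) \<in> J \<or> (0, 0, 1) \<in> J"
    using \<open>x \<noteq> 0\<close> unit_in_J by (cases x) (auto simp: zero_prod_def)
  then have "(1, 0, 0) \<in> J" "(0, 1, 0) \<in> J" "(0, 0, 1) \<in> J"
    using cross_closed[of "(1, 0, 0)" "(0, 0, 1)"] cross_closed[of "(0, 1, 0)" "(1, 0, 0)"]
      cross_closed[of "(0, 0, 1)" "(0, 1, 0)"]
    by auto
  with add_closed scale_closed show ?thesis
    by (rule c3_subspace_eq_UNIV) simp_all
qed

lemma eval_at_derived_surj:
  assumes "on_curve e1 e2 e3 P" "eval_at (relI e1 e2 e3) P ` s = UNIV"
  shows "eval_at (relI e1 e2 e3) P ` derived (relI e1 e2 e3) s k = UNIV"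
proof (induction k)
  case 0
  then show ?case
    using assms(2) by simp
next
  case (Suc k)
  let ?I = "relI e1 e2 e3"
  let ?D = "derived ?I s k"
  let ?B = "{Lbr ?I x y | x y. x \<in> ?D \<and> y \<in> ?D}"
  have "v \<in> eval_at ?I P ` Lspan ?I ?B" for v
  proof -
    obtain v1 v2 v3 where v: "v = (v1, v2, v3)"
      by (cases v)
    have preimage: "\<exists>x\<in>?D. eval_at ?I P x = u" for u
      using Suc.IH by (metis UNIV_I imageE)
    obtain x1 x2 x3 where "x1 \<in> ?D" "eval_at ?I P x1 = (1, 0, 0)" "x2 \<in> ?D"
      "eval_at ?I P x2 = (0, 1, 0)" "x3 \<in> ?D" "eval_at ?I P x3 = (0, 0, 1)"
      using preimage by meson
    moreover from this have "Ladd ?I (Lscale ?I v1 (Lbr ?I x2 x3))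
        (Ladd ?I (Lscale ?I v2 (Lbr ?I x3 x1)) (Lscale ?I v3 (Lbr ?I x1 x2))) \<in> Lspan ?I ?B"
      by (intro Lspan.span_add Lspan.span_scale Lspan.span_base) blast+
    ultimately show ?thesis
      by (force simp: v eval_at_Ladd[OF assms(1)] eval_at_Lscale[OF assms(1)]
          eval_at_Lbr[OF assms(1)])
  qed
  then show ?case
    by auto
qed

section \<open>Consequences of finite codimension\<close>

lemma homogeneous_system_nontrivial_solution:
  fixes c :: "'k \<Rightarrow> 'e \<Rightarrow> 'a::field"
  assumes "finite E" "finite K" "card E < card K"
  obtains a where "\<exists>k\<in>K. a k \<noteq> 0" "\<forall>f\<in>E. (\<Sum>k\<in>K. a k * c k f) = 0"
  using assms
proof (induction E arbitrary: K c thesis rule: finite_induct)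
  case empty
  then obtain k0 where "k0 \<in> K"
    by fastforce
  then show ?case
    using empty.prems(1)[of "\<lambda>_. 1"] by auto
next
  case (insert f E)
  show ?case
  proof (cases "\<forall>k\<in>K. c k f = 0")
    case True
    have "card E < card K"
      using insert by simp
    then obtain a where "\<exists>k\<in>K. a k \<noteq> 0" "\<forall>g\<in>E. (\<Sum>k\<in>K. a k * c k g) = 0"
      using insert.IH[of K c] insert.prems(2) by blast
    then show ?thesis
      using True insert.prems(1) by auto
  next
    case False
    then obtain k0 where k0: "k0 \<in> K" "c k0 f \<noteq> 0"
      by blast
    \<comment> \<open>Gaussian elimination: the equation for \<open>f\<close> determines the unknown \<open>a k0\<close>\<close>
    define K' where "K' = K - {k0}"
    define c' where "c' k g = c k g - (c k f / c k0 f) * c k0 g" for k g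
    have "finite K'" "card E < card K'"
      using insert.hyps insert.prems(2,3) k0(1) by (auto simp: K'_def)
    then obtain a' where a': "\<exists>k\<in>K'. a' k \<noteq> 0" "\<forall>g\<in>E. (\<Sum>k\<in>K'. a' k * c' k g) = 0"
      using insert.IH[of K' c'] by blast
    define S where "S = (\<Sum>k\<in>K'. a' k * c k f)"
    define a where "a k = (if k = k0 then - S / c k0 f else a' k)" for k
    have split: "(\<Sum>k\<in>K. a k * c k g) = a k0 * c k0 g + (\<Sum>k\<in>K'. a' k * c k g)" for g
    proof -
      have "(\<Sum>k\<in>K. a k * c k g) = a k0 * c k0 g + (\<Sum>k\<in>K'. a k * c k g)"
        unfolding K'_def using k0 insert.prems by (simp add: sum.remove)
      also have "(\<Sum>k\<in>K'. a k * c k g) = (\<Sum>k\<in>K'. a' k * c k g)"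
        by (rule sum.cong) (auto simp: a_def K'_def)
      finally show ?thesis .
    qed
    have "(\<Sum>k\<in>K. a k * c k g) = 0" if "g \<in> insert f E" for g
    proof (cases "g = f")
      case True
      then show ?thesis
        using k0 unfolding split by (simp add: a_def S_def)
    next
      case False
      then have "0 = (\<Sum>k\<in>K'. a' k * c k g - (a' k * c k f) / c k0 f * c k0 g)"
        using a'(2) that by (simp add: c'_def algebra_simps)
      also have "\<dots> = (\<Sum>k\<in>K'. a' k * c k g) - S / c k0 f * c k0 g"
        by (simp add: sum_subtractf S_def sum_divide_distrib sum_distrib_right)
      finally show ?thesis
        unfolding split by (simp add: a_def)
    qed
    moreover have "\<exists>k\<in>K. a k \<noteq> 0"
      using a'(1) by (auto simp: a_def K'_def)
    ultimately show ?thesis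
      using insert.prems(1) by blast
  qed
qed

lemma subspaceD:
  assumes "is_subspace I h"
  shows "Lzero I \<in> h" "x \<in> h \<Longrightarrow> y \<in> h \<Longrightarrow> Ladd I x y \<in> h" "x \<in> h \<Longrightarrow> Lscale I c x \<in> h"
  using assms unfolding is_subspace_def by auto

lemma Lspan_decompose_on_curve:
  assumes sub: "is_subspace (relI e1 e2 e3) h" and "finite F"
    and "X \<in> Lspan (relI e1 e2 e3) (h \<union> F)"
  shows "\<exists>y\<in>h. \<exists>c. \<forall>P. on_curve e1 e2 e3 P \<longrightarrow> eval_at (relI e1 e2 e3) P X =
    eval_at (relI e1 e2 e3) P y + (\<Sum>f\<in>F. scale (c f) (eval_at (relI e1 e2 e3) P f))"
  using assms(3)
proof (induction rule: Lspan.induct)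
  case span_zero
  show ?case
    by (intro bexI[of _ "Lzero (relI e1 e2 e3)"] exI[of _ "\<lambda>_. 0"])
      (simp_all add: eval_at_Lzero subspaceD[OF sub])
next
  case (span_base x)
  show ?case
  proof (cases "x \<in> h")
    case True
    then show ?thesis
      by (intro bexI[of _ x] exI[of _ "\<lambda>_. 0"]) simp_all
  next
    case False
    then have "x \<in> F"
      using span_base by blast
    then have "(\<Sum>f\<in>F. scale (if f = x then 1 else 0) (eval_at (relI e1 e2 e3) P f))
        = eval_at (relI e1 e2 e3) P x" for P
      using \<open>finite F\<close> by (simp add: if_distrib[of "\<lambda>c. scale c _"] cong: if_cong)
    then show ?thesis
      by (intro bexI[of _ "Lzero (relI e1 e2 e3)"] exI[of _ "\<lambda>f. if f = x then 1 else 0"])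
        (simp_all add: eval_at_Lzero subspaceD[OF sub])
  qed
next
  case (span_add x y)
  then obtain y1 c1 y2 c2 where "y1 \<in> h" "y2 \<in> h"
    and "\<forall>P. on_curve e1 e2 e3 P \<longrightarrow> eval_at (relI e1 e2 e3) P x =
      eval_at (relI e1 e2 e3) P y1 + (\<Sum>f\<in>F. scale (c1 f) (eval_at (relI e1 e2 e3) P f))"
    and "\<forall>P. on_curve e1 e2 e3 P \<longrightarrow> eval_at (relI e1 e2 e3) P y =
      eval_at (relI e1 e2 e3) P y2 + (\<Sum>f\<in>F. scale (c2 f) (eval_at (relI e1 e2 e3) P f))"
    by blast
  then show ?case
    by (intro bexI[of _ "Ladd (relI e1 e2 e3) y1 y2"] exI[of _ "\<lambda>f. c1 f + c2 f"])
      (simp_all add: eval_at_Ladd subspaceD[OF sub] scale_add_left sum.distrib add_ac)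
next
  case (span_scale x c)
  then obtain y1 c1 where "y1 \<in> h"
    and "\<forall>P. on_curve e1 e2 e3 P \<longrightarrow> eval_at (relI e1 e2 e3) P x =
      eval_at (relI e1 e2 e3) P y1 + (\<Sum>f\<in>F. scale (c1 f) (eval_at (relI e1 e2 e3) P f))"
    by blast
  then show ?case
    by (intro bexI[of _ "Lscale (relI e1 e2 e3) c y1"] exI[of _ "\<lambda>f. c * c1 f"])
      (simp_all add: eval_at_Lscale subspaceD[OF sub] scale_add_right scale_sum_right)
qed

lemma subspace_combination_on_curve:
  assumes sub: "is_subspace (relI e1 e2 e3) h" and "finite K" "y ` K \<subseteq> h"
  shows "\<exists>z\<in>h. \<forall>P. on_curve e1 e2 e3 P \<longrightarrow>
    eval_at (relI e1 e2 e3) P z = (\<Sum>k\<in>K. scale (a k) (eval_at (relI e1 e2 e3) P (y k)))"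
  using assms(2,3)
proof (induction K rule: finite_induct)
  case empty
  then show ?case
    by (intro bexI[of _ "Lzero (relI e1 e2 e3)"]) (simp_all add: eval_at_Lzero subspaceD[OF sub])
next
  case (insert k K)
  then obtain z where "z \<in> h" "\<forall>P. on_curve e1 e2 e3 P \<longrightarrow>
      eval_at (relI e1 e2 e3) P z = (\<Sum>k\<in>K. scale (a k) (eval_at (relI e1 e2 e3) P (y k)))"
    by auto
  with insert show ?case
    by (intro bexI[of _ "Ladd (relI e1 e2 e3) (Lscale (relI e1 e2 e3) (a k) (y k)) z"])
      (simp_all add: eval_at_Ladd eval_at_Lscale subspaceD[OF sub])
qed

lemma Lspan_family_dependent_mod_subspace:
  assumes sub: "is_subspace (relI e1 e2 e3) h" and "finite F"
    and W: "\<And>k. W k \<in> Lspan (relI e1 e2 e3) (h \<union> F)"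
  obtains z a where "z \<in> h" "\<exists>k\<le>card F. a k \<noteq> 0"
    "\<And>P. on_curve e1 e2 e3 P \<Longrightarrow>
      eval_at (relI e1 e2 e3) P z = (\<Sum>k\<le>card F. scale (a k) (eval_at (relI e1 e2 e3) P (W k)))"
proof -
  let ?v = "eval_at (relI e1 e2 e3)"
  have "\<forall>k. \<exists>y c. y \<in> h \<and> (\<forall>P. on_curve e1 e2 e3 P \<longrightarrow>
      ?v P (W k) = ?v P y + (\<Sum>f\<in>F. scale (c f) (?v P f)))"
    using Lspan_decompose_on_curve[OF sub \<open>finite F\<close> W] by blast
  then obtain y where "\<forall>k. \<exists>c. y k \<in> h \<and> (\<forall>P. on_curve e1 e2 e3 P \<longrightarrow>
      ?v P (W k) = ?v P (y k) + (\<Sum>f\<in>F. scale (c f) (?v P f)))"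
    by (auto simp only: choice_iff)
  then obtain c where "\<forall>k. y k \<in> h \<and> (\<forall>P. on_curve e1 e2 e3 P \<longrightarrow>
      ?v P (W k) = ?v P (y k) + (\<Sum>f\<in>F. scale (c k f) (?v P f)))"
    by (auto simp only: choice_iff)
  then have y: "\<And>k. y k \<in> h" and yc: "\<And>k P. on_curve e1 e2 e3 P \<Longrightarrow>
      ?v P (W k) = ?v P (y k) + (\<Sum>f\<in>F. scale (c k f) (?v P f))"
    by blast+
  \<comment> \<open>\<open>card F + 1\<close> unknowns, \<open>card F\<close> equations: kill the \<open>F\<close>-components\<close>
  obtain a where a: "\<exists>k\<in>{..card F}. a k \<noteq> 0" "\<forall>f\<in>F. (\<Sum>k\<le>card F. a k * c k f) = 0"
    using homogeneous_system_nontrivial_solution[OF \<open>finite F\<close>, of "{..card F}" c] by auto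
  have "y ` {..card F} \<subseteq> h"
    using y by blast
  then obtain z where "z \<in> h"
    and z: "\<And>P. on_curve e1 e2 e3 P \<Longrightarrow> ?v P z = (\<Sum>k\<le>card F. scale (a k) (?v P (y k)))"
    using subspace_combination_on_curve[OF sub finite_atMost] by blast
  have "?v P z = (\<Sum>k\<le>card F. scale (a k) (?v P (W k)))" if "on_curve e1 e2 e3 P" for P
  proof -
    have "?v P z = (\<Sum>k\<le>card F. scale (a k) (?v P (W k) - (\<Sum>f\<in>F. scale (c k f) (?v P f))))"
      using z[OF that] yc[OF that] by simp
    also have "\<dots> = (\<Sum>k\<le>card F. scale (a k) (?v P (W k)))
        - (\<Sum>f\<in>F. scale (\<Sum>k\<le>card F. a k * c k f) (?v P f))"
      by (simp add: scale_diff_right sum_subtractf sum_scale_sum_scale)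
    finally show ?thesis
      using a(2) by simp
  qed
  then show thesis
    using that \<open>z \<in> h\<close> a(1) by blast
qed

primrec bracket_iter :: "cpoly set \<Rightarrow> ltriple \<Rightarrow> ltriple \<Rightarrow> nat \<Rightarrow> ltriple" where
  "bracket_iter I A B 0 = A"
| "bracket_iter I A B (Suc k) = Lscale I (-1) (Lbr I (Lbr I (bracket_iter I A B k) B) B)"

lemma bracket_iter_in_Lgen: "A \<in> Lgen I S \<Longrightarrow> B \<in> Lgen I S \<Longrightarrow> bracket_iter I A B k \<in> Lgen I S"
  by (induction k) (auto intro: Lgen.intros)

lemma eval_at_bracket_iter:
  assumes on: "on_curve e1 e2 e3 P"
    and orth: "dot (eval_at (relI e1 e2 e3) P A) (eval_at (relI e1 e2 e3) P B) = 0"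
  shows "eval_at (relI e1 e2 e3) P (bracket_iter (relI e1 e2 e3) A B k)
    = scale (dot (eval_at (relI e1 e2 e3) P B) (eval_at (relI e1 e2 e3) P B) ^ k)
        (eval_at (relI e1 e2 e3) P A)"
proof (induction k)
  case (Suc k)
  \<comment> \<open>\<open>ad_B\<^sup>2\<close> acts on the orthogonal complement of \<open>B\<close> as multiplication by \<open>-(B\<cdot>B)\<close>\<close>
  have "dot (scale c u) b = c * dot u b" for c u b
    by (cases u; cases b) (simp add: algebra_simps)
  with Suc orth show ?case
    by (simp add: eval_at_Lscale[OF on] eval_at_Lbr[OF on] cross_cross_right scale_diff_right)
qed simp

lemma subalgebra_contains_generic_multiple:
  assumes sub: "is_subspace (relI e1 e2 e3) h" and "finite F"
    and R: "Ralg e1 e2 e3 = Lspan (relI e1 e2 e3) (h \<union> F)"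
    and "A \<in> Ralg e1 e2 e3" "B \<in> Ralg e1 e2 e3"
    and orth: "\<And>t1 t2 t3. on_curve e1 e2 e3 (t1, t2, t3) \<Longrightarrow>
      dot (eval_at (relI e1 e2 e3) (t1, t2, t3) A) (eval_at (relI e1 e2 e3) (t1, t2, t3) B) = 0"
    and norm: "\<And>t1 t2 t3. on_curve e1 e2 e3 (t1, t2, t3) \<Longrightarrow>
      dot (eval_at (relI e1 e2 e3) (t1, t2, t3) B) (eval_at (relI e1 e2 e3) (t1, t2, t3) B)
        = t1\<^sup>2 + e1 - e"
  obtains z Z where "z \<in> h" "finite Z"
    "\<And>t1 t2 t3. on_curve e1 e2 e3 (t1, t2, t3) \<Longrightarrow> t1\<^sup>2 + e1 \<notin> Z \<Longrightarrow>
      \<exists>c. c \<noteq> 0 \<and> eval_at (relI e1 e2 e3) (t1, t2, t3) z = scale c (eval_at (relI e1 e2 e3) (t1, t2, t3) A)"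
proof -
  let ?I = "relI e1 e2 e3"
  have "bracket_iter ?I A B k \<in> Lspan ?I (h \<union> F)" for k
    using bracket_iter_in_Lgen assms(4,5) R unfolding Ralg_def by metis
  then obtain z a where "z \<in> h" and a: "\<exists>k\<le>card F. a k \<noteq> 0"
    and z: "\<And>P. on_curve e1 e2 e3 P \<Longrightarrow>
      eval_at ?I P z = (\<Sum>k\<le>card F. scale (a k) (eval_at ?I P (bracket_iter ?I A B k)))"
    using Lspan_family_dependent_mod_subspace[OF sub \<open>finite F\<close>] by blast
  define G where "G w = (\<Sum>k\<le>card F. a k * w ^ k)" for w
  define Z where "Z = (\<lambda>w. w + e) ` {w. G w = 0}"
  have "finite Z"
    unfolding Z_def G_def using a polyfun_roots_finite by blast
  have "eval_at ?I (t1, t2, t3) z = scale (G (t1\<^sup>2 + e1 - e)) (eval_at ?I (t1, t2, t3) A)"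
    if on: "on_curve e1 e2 e3 (t1, t2, t3)" for t1 t2 t3
    by (simp add: z[OF on] eval_at_bracket_iter[OF on orth[OF on]] norm[OF on] G_def
        scale_sum_left)
  moreover have "G (t1\<^sup>2 + e1 - e) \<noteq> 0" if "t1\<^sup>2 + e1 \<notin> Z" for t1
    using that unfolding Z_def by force
  ultimately show thesis
    using that \<open>z \<in> h\<close> \<open>finite Z\<close> by metis
qed

lemma eval_at_image_subspace:
  assumes sub: "is_subspace (relI e1 e2 e3) h" and on: "on_curve e1 e2 e3 P"
  shows "u \<in> eval_at (relI e1 e2 e3) P ` h \<Longrightarrow> v \<in> eval_at (relI e1 e2 e3) P ` h \<Longrightarrow>
      u + v \<in> eval_at (relI e1 e2 e3) P ` h"
    and "u \<in> eval_at (relI e1 e2 e3) P ` h \<Longrightarrow> scale c u \<in> eval_at (relI e1 e2 e3) P ` h"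
proof -
  assume "u \<in> eval_at (relI e1 e2 e3) P ` h" "v \<in> eval_at (relI e1 e2 e3) P ` h"
  then obtain x y where "x \<in> h" "y \<in> h" "u = eval_at (relI e1 e2 e3) P x"
    "v = eval_at (relI e1 e2 e3) P y"
    by blast
  then show "u + v \<in> eval_at (relI e1 e2 e3) P ` h"
    using subspaceD(2)[OF sub] eval_at_Ladd[OF on] by (metis image_eqI)
next
  assume "u \<in> eval_at (relI e1 e2 e3) P ` h"
  then obtain x where "x \<in> h" "u = eval_at (relI e1 e2 e3) P x"
    by blast
  then show "scale c u \<in> eval_at (relI e1 e2 e3) P ` h"
    using subspaceD(3)[OF sub] eval_at_Lscale[OF on] by (metis image_eqI)
qed

lemma generators_in_Ralg:
  "cls (relI e1 e2 e3) (pvar 1, 0, 0) \<in> Ralg e1 e2 e3"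
  "cls (relI e1 e2 e3) (0, pvar 2, 0) \<in> Ralg e1 e2 e3"
  "cls (relI e1 e2 e3) (0, 0, pvar 3) \<in> Ralg e1 e2 e3"
  unfolding Ralg_def Rgens_def by (auto intro: Lgen.gen_base)

lemma eval_at_subalgebra_surj_generic:
  assumes sub: "is_subspace (relI e1 e2 e3) h"
    and "finite_codim (relI e1 e2 e3) h (Ralg e1 e2 e3)"
  obtains Z where "finite Z"
    "\<And>t1 t2 t3. on_curve e1 e2 e3 (t1, t2, t3) \<Longrightarrow> t1\<^sup>2 + e1 \<notin> Z \<Longrightarrow>
      eval_at (relI e1 e2 e3) (t1, t2, t3) ` h = UNIV"
proof -
  let ?I = "relI e1 e2 e3"
  obtain F where "finite F" and R: "Ralg e1 e2 e3 = Lspan ?I (h \<union> F)"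
    using assms(2) unfolding finite_codim_def by blast
  note multiple = subalgebra_contains_generic_multiple[OF sub \<open>finite F\<close> R]
  have level: "t2 * t2 = t1\<^sup>2 + e1 - e2" "t3 * t3 = t1\<^sup>2 + e1 - e3"
    if "on_curve e1 e2 e3 (t1, t2, t3)" for t1 t2 t3
    using that by (auto simp: on_curve.simps algebra_simps power2_eq_square)
  obtain z1 Z1 where "z1 \<in> h" "finite Z1" and z1: "\<And>t1 t2 t3. on_curve e1 e2 e3 (t1, t2, t3) \<Longrightarrow>
      t1\<^sup>2 + e1 \<notin> Z1 \<Longrightarrow> \<exists>c. c \<noteq> 0 \<and> eval_at ?I (t1, t2, t3) z1 = scale c (t1, 0, 0)"
    using multiple[OF generators_in_Ralg(1,2), of e2]
    by (simp add: eval_at_cls level; blast)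
  obtain z2 Z2 where "z2 \<in> h" "finite Z2" and z2: "\<And>t1 t2 t3. on_curve e1 e2 e3 (t1, t2, t3) \<Longrightarrow>
      t1\<^sup>2 + e1 \<notin> Z2 \<Longrightarrow> \<exists>c. c \<noteq> 0 \<and> eval_at ?I (t1, t2, t3) z2 = scale c (0, t2, 0)"
    using multiple[OF generators_in_Ralg(2,3), of e3]
    by (simp add: eval_at_cls level; blast)
  obtain z3 Z3 where "z3 \<in> h" "finite Z3" and z3: "\<And>t1 t2 t3. on_curve e1 e2 e3 (t1, t2, t3) \<Longrightarrow>
      t1\<^sup>2 + e1 \<notin> Z3 \<Longrightarrow> \<exists>c. c \<noteq> 0 \<and> eval_at ?I (t1, t2, t3) z3 = scale c (0, 0, t3)"
    using multiple[OF generators_in_Ralg(3,1), of e1]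
    by (simp add: eval_at_cls power2_eq_square; blast)
  define Z where "Z = {e1, e2, e3} \<union> Z1 \<union> Z2 \<union> Z3"
  have "eval_at ?I (t1, t2, t3) ` h = UNIV"
    if on: "on_curve e1 e2 e3 (t1, t2, t3)" and "t1\<^sup>2 + e1 \<notin> Z" for t1 t2 t3
  proof -
    have "t1\<^sup>2 + e1 \<notin> Z1" "t1\<^sup>2 + e1 \<notin> Z2" "t1\<^sup>2 + e1 \<notin> Z3"
      using \<open>t1\<^sup>2 + e1 \<notin> Z\<close> by (simp_all add: Z_def)
    then obtain c1 c2 c3 where c: "c1 \<noteq> 0" "c2 \<noteq> 0" "c3 \<noteq> 0"
      and "eval_at ?I (t1, t2, t3) z1 = (c1 * t1, 0, 0)"
      and "eval_at ?I (t1, t2, t3) z2 = (0, c2 * t2, 0)"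
      and "eval_at ?I (t1, t2, t3) z3 = (0, 0, c3 * t3)"
      using z1[OF on] z2[OF on] z3[OF on] by auto
    with \<open>z1 \<in> h\<close> \<open>z2 \<in> h\<close> \<open>z3 \<in> h\<close>
    have image: "(c1 * t1, 0, 0) \<in> eval_at ?I (t1, t2, t3) ` h"
      "(0, c2 * t2, 0) \<in> eval_at ?I (t1, t2, t3) ` h" "(0, 0, c3 * t3) \<in> eval_at ?I (t1, t2, t3) ` h"
      by (metis image_eqI)+
    have "t1\<^sup>2 + e1 \<noteq> e1" "t1\<^sup>2 + e1 \<noteq> e2" "t1\<^sup>2 + e1 \<noteq> e3"
      using \<open>t1\<^sup>2 + e1 \<notin> Z\<close> by (auto simp: Z_def)
    then have "c1 * t1 \<noteq> 0" "c2 * t2 \<noteq> 0" "c3 * t3 \<noteq> 0"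
      using c level[OF on] by auto
    with eval_at_image_subspace[OF sub on] image show ?thesis
      by (rule c3_subspace_eq_UNIV)
  qed
  moreover have "finite Z"
    using \<open>finite Z1\<close> \<open>finite Z2\<close> \<open>finite Z3\<close> by (simp add: Z_def)
  ultimately show thesis
    using that by blast
qed

lemma eval_at_ideal_surj:
  assumes on: "on_curve e1 e2 e3 P" and surj: "eval_at (relI e1 e2 e3) P ` h = UNIV"
    and ideal: "is_lie_ideal (relI e1 e2 e3) s h"
    and "x \<in> s" "eval_at (relI e1 e2 e3) P x \<noteq> 0"
  shows "eval_at (relI e1 e2 e3) P ` s = UNIV"
proof -
  let ?v = "eval_at (relI e1 e2 e3) P"
  have sub: "is_subspace (relI e1 e2 e3) s"
    using ideal by (simp add: is_lie_ideal_def)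
  have "cross u v \<in> ?v ` s" if v: "v \<in> ?v ` s" for u v
  proof -
    obtain y where "y \<in> h" "?v y = u"
      using surj by (metis UNIV_I imageE)
    moreover obtain b where "b \<in> s" "v = ?v b"
      using v by blast
    ultimately have "cross u v = ?v (Lbr (relI e1 e2 e3) y b)" "Lbr (relI e1 e2 e3) y b \<in> s"
      using ideal by (simp_all add: eval_at_Lbr[OF on] is_lie_ideal_def)
    then show ?thesis
      by (rule image_eqI)
  qed
  with eval_at_image_subspace[OF sub on] show ?thesis
    by (rule cross_ideal_eq_UNIV) (use assms(4,5) in auto)
qed

theorem lemma6p4:
  fixes e1 e2 e3 :: complex and h s :: "ltriple set"
  assumes "e1 \<noteq> e2" and "e1 \<noteq> e3" and "e2 \<noteq> e3"
    and "is_lie_subalgebra (relI e1 e2 e3) h"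
    and "h \<subseteq> Ralg e1 e2 e3"
    and "finite_codim (relI e1 e2 e3) h (Ralg e1 e2 e3)"
    and "is_lie_ideal (relI e1 e2 e3) s h"
    and "is_solvable (relI e1 e2 e3) s"
  shows "s = {Lzero (relI e1 e2 e3)}"
proof (rule ccontr)
  let ?I = "relI e1 e2 e3"
  assume "s \<noteq> {Lzero ?I}"
  have "is_subspace ?I h" "is_subspace ?I s" "s \<subseteq> h"
    using assms(4,7) by (simp_all add: is_lie_subalgebra_def is_lie_ideal_def)
  moreover obtain x where "x \<in> s" "x \<noteq> Lzero ?I"
    using \<open>s \<noteq> {Lzero ?I}\<close> subspaceD(1)[OF \<open>is_subspace ?I s\<close>] by blast
  ultimately have "x \<in> Lcarrier ?I"
    by (auto simp: is_subspace_def)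
  obtain Z where "finite Z" and surj: "\<And>t1 t2 t3. on_curve e1 e2 e3 (t1, t2, t3) \<Longrightarrow>
      t1\<^sup>2 + e1 \<notin> Z \<Longrightarrow> eval_at ?I (t1, t2, t3) ` h = UNIV"
    using eval_at_subalgebra_surj_generic[OF \<open>is_subspace ?I h\<close> assms(6)] by blast
  then obtain t1 t2 t3 where on: "on_curve e1 e2 e3 (t1, t2, t3)" and "t1\<^sup>2 + e1 \<notin> Z"
    and "eval_at ?I (t1, t2, t3) x \<noteq> 0"
    using eval_at_nonzero_at_generic_point[OF \<open>x \<in> Lcarrier ?I\<close> \<open>x \<noteq> Lzero ?I\<close>] by blast
  then have "eval_at ?I (t1, t2, t3) ` s = UNIV"
    using eval_at_ideal_surj[OF on surj assms(7) \<open>x \<in> s\<close>] by blast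
  moreover obtain k where "derived ?I s k = {Lzero ?I}"
    using assms(8) by (auto simp: is_solvable_def)
  ultimately have "eval_at ?I (t1, t2, t3) ` {Lzero ?I} = UNIV"
    using eval_at_derived_surj[OF on, of s k] by simp
  then have "(1, 0, 0) \<in> eval_at ?I (t1, t2, t3) ` {Lzero ?I}"
    by simp
  then show False
    by (simp add: eval_at_Lzero[OF on] zero_prod_def)
qed

end
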